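(* In the computational model where dictionary lookup for a key of length $r$ costs $O(r)$ expected time, for a query Pauli string $P$ of weight $w$, computing \[ Z=\sum_{A\subseteq\operatorname{supp}(P)}(-2)^{|A|}\sum_{a\in\mathcal{L}_P(A)}D[(A,a)],\qquad \text{and returning } (N-Z)/2, \] by enumerating all $A\subseteq\operatorname{supp}(P)$ and all $a\in\mathcal{L}_P(A)$, performs exactly $3^w$ dictionary lookups and takes $O(w3^w)$ expected time. Here $\mathcal{L}_P(A)=\{a:A\to\{X,Y,Z\}: a(j)\neq P_j\ \forall j\in A\}$.
   Context: A phase-free $n$-qubit Pauli string is a word $P=(P_1,\dots,P_n)\in\{I,X,Y,Z\}^n$, stored sparsely as the pairs $(j,P_j)$ for $j$ in its support $\operatorname{supp}(P)=\{j:P_j\neq I\}$; its weight is $w=|\operatorname{supp}(P)|$. $D$ is a dictionary whose keys are labeled patterns $(A,a)$ with $A$ a set of qubit positions and $a:A\to\{X,Y,Z\}$, of length $|A|$, mapping to integer counts (absent keys count as zero); $N$ is an integer. *)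

theory Defs
  imports Complex_Main
begin

datatype pauli = PI | PX | PY | PZ

text \<open>A phase-free n-qubit Pauli string: a word indexed by qubit positions 0..n-1
  (identity outside), stored through its support.\<close>
definition pauli_string :: "nat \<Rightarrow> (nat \<Rightarrow> pauli) \<Rightarrow> bool" where
  "pauli_string n P \<longleftrightarrow> (\<forall>j. n \<le> j \<longrightarrow> P j = PI)"

definition supp :: "(nat \<Rightarrow> pauli) \<Rightarrow> nat set" where
  "supp P = {j. P j \<noteq> PI}"

definition weight :: "(nat \<Rightarrow> pauli) \<Rightarrow> nat" where
  "weight P = card (supp P)"

text \<open>Labeled patterns (A,a): a is a map A \<rightarrow> {X,Y,Z}, represented as a total
  function that is PI outside A. Dictionaries map keys to integer counts
  (absent keys count as zero, i.e. a total function).\<close>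
type_synonym key = "nat set \<times> (nat \<Rightarrow> pauli)"
type_synonym dict = "key \<Rightarrow> int"

definition LP :: "(nat \<Rightarrow> pauli) \<Rightarrow> nat set \<Rightarrow> (nat \<Rightarrow> pauli) set" where
  "LP P A = {a. (\<forall>j\<in>A. a j \<in> {PX, PY, PZ} \<and> a j \<noteq> P j) \<and> (\<forall>j. j \<notin> A \<longrightarrow> a j = PI)}"

definition Zspec :: "dict \<Rightarrow> (nat \<Rightarrow> pauli) \<Rightarrow> int" where
  "Zspec D P = (\<Sum>A\<in>Pow (supp P). (-2) ^ card A * (\<Sum>a\<in>LP P A. D (A, a)))"

fun labels :: "(nat \<Rightarrow> pauli) \<Rightarrow> nat list \<Rightarrow> (nat \<Rightarrow> pauli) list" where
  "labels P [] = [(\<lambda>_. PI)]"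
| "labels P (j # js) = [a(j := b). a \<leftarrow> labels P js, b \<leftarrow> filter (\<lambda>b. b \<noteq> P j) [PX, PY, PZ]]"

definition supp_list :: "(nat \<Rightarrow> pauli) \<Rightarrow> nat list" where
  "supp_list P = sorted_list_of_set (supp P)"

definition lookups :: "(nat \<Rightarrow> pauli) \<Rightarrow> key list" where
  "lookups P = concat (map (\<lambda>js. map (\<lambda>a. (set js, a)) (labels P js)) (subseqs (supp_list P)))"

definition Zalg :: "dict \<Rightarrow> (nat \<Rightarrow> pauli) \<Rightarrow> int" where
  "Zalg D P = sum_list (map (\<lambda>(A, a). (-2) ^ card A * D (A, a)) (lookups P))"

definition algo_result :: "dict \<Rightarrow> int \<Rightarrow> (nat \<Rightarrow> pauli) \<Rightarrow> rat" where
  "algo_result D N P = of_int (N - Zalg D P) / 2"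

text \<open>Cost model. lc r is the (expected) cost of one dictionary lookup with a key
  of length r. Each enumerated key (A,a) additionally costs |A| + 1 for building
  the key and the arithmetic update; computing the support and the final answer
  costs w + 1.\<close>
definition algo_cost :: "(nat \<Rightarrow> real) \<Rightarrow> (nat \<Rightarrow> pauli) \<Rightarrow> real" where
  "algo_cost lc P = (\<Sum>(A, a)\<leftarrow>lookups P. lc (card A) + real (card A) + 1) + real (weight P) + 1"

end

theory Submission
  imports Defs
begin

text \<open>The lookup sequence enumerates every key \<open>(A, a)\<close> with \<open>A \<subseteq> supp P\<close> and
  \<open>a \<in> LP P A\<close> exactly once, so the accumulated sum is \<open>Z\<close>. Each position of the
  support admits two letters different from \<open>P j\<close>, so \<open>LP P A\<close> has \<open>2 ^ card A\<close>
  elements and there are \<open>\<Sum>\<^sub>A 2 ^ card A = 3 ^ w\<close> lookups (binomial theorem).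
  Each of them costs \<open>O(card A + 1) \<subseteq> O(w + 1)\<close>, hence the bound \<open>O(w 3 ^ w)\<close>.\<close>

lemma sum_list_subseqs_power:
  fixes k :: "'a::comm_semiring_1"
  shows "(\<Sum>ys\<leftarrow>subseqs xs. k ^ length ys) = (k + 1) ^ length xs"
proof (induction xs)
  case Nil
  then show ?case by simp
next
  case (Cons x xs)
  have "(\<Sum>ys\<leftarrow>subseqs (x # xs). k ^ length ys)
      = k * (\<Sum>ys\<leftarrow>subseqs xs. k ^ length ys) + (\<Sum>ys\<leftarrow>subseqs xs. k ^ length ys)"
    by (simp add: Let_def o_def sum_list_const_mult)
  with Cons.IH show ?case by (simp add: algebra_simps)
qed

lemma sum_list_concat: "sum_list (concat xss) = (\<Sum>xs\<leftarrow>xss. sum_list xs)"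
  by (induction xss) simp_all

lemma set_subseqs_subset: "ys \<in> set (subseqs xs) \<Longrightarrow> set ys \<subseteq> set xs"
  using subseqs_powset[of xs] by blast

abbreviation other_letters :: "(nat \<Rightarrow> pauli) \<Rightarrow> nat \<Rightarrow> pauli list" where
  "other_letters P j \<equiv> filter (\<lambda>b. b \<noteq> P j) [PX, PY, PZ]"

lemma labels_Cons_product:
  "labels P (j # js) = map (\<lambda>(a, b). a(j := b)) (List.product (labels P js) (other_letters P j))"
  by (simp only: labels.simps product_concat_map map_concat map_map o_def case_prod_conv)

lemma LP_insert:
  assumes "j \<notin> A"
  shows "LP P (insert j A) = (\<lambda>(a, b). a(j := b)) ` (LP P A \<times> set (other_letters P j))"
proof
  show "LP P (insert j A) \<subseteq> (\<lambda>(a, b). a(j := b)) ` (LP P A \<times> set (other_letters P j))"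
  proof
    fix a assume a: "a \<in> LP P (insert j A)"
    have "(a(j := PI), a j) \<in> LP P A \<times> set (other_letters P j)"
      using a assms by (auto simp: LP_def)
    moreover have "a = (a(j := PI))(j := a j)" by simp
    ultimately show "a \<in> (\<lambda>(a, b). a(j := b)) ` (LP P A \<times> set (other_letters P j))"
      by (metis (no_types, lifting) case_prod_conv image_eqI)
  qed
  show "(\<lambda>(a, b). a(j := b)) ` (LP P A \<times> set (other_letters P j)) \<subseteq> LP P (insert j A)"
    using assms by (fastforce simp: LP_def split: if_split_asm)
qed

lemma inj_on_fun_upd_LP:
  assumes "j \<notin> A"
  shows "inj_on (\<lambda>(a, b). a(j := b)) (LP P A \<times> B)"
proof (rule inj_onI, clarify)
  fix a b a' b'
  assume "a \<in> LP P A" "a' \<in> LP P A" and eq: "a(j := b) = a'(j := b')"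
  then have "a j = a' j" using assms by (simp add: LP_def)
  with eq show "a = a' \<and> b = b'"
    by (metis fun_upd_idem fun_upd_upd fun_upd_same)
qed

lemma set_labels: "distinct js \<Longrightarrow> set (labels P js) = LP P (set js)"
proof (induction js)
  case Nil
  then show ?case by (auto simp: LP_def)
next
  case (Cons j js)
  then have "j \<notin> set js" and "set (labels P js) = LP P (set js)" by simp_all
  then show ?case by (simp only: labels_Cons_product set_map set_product list.set(2) LP_insert not_False_eq_True)
qed

lemma distinct_labels: "distinct js \<Longrightarrow> distinct (labels P js)"
proof (induction js)
  case Nil
  then show ?case by simp
next
  case (Cons j js)
  then have "inj_on (\<lambda>(a, b). a(j := b)) (set (List.product (labels P js) (other_letters P j)))"
    by (simp add: set_labels inj_on_fun_upd_LP)
  with Cons show ?case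
    by (simp add: labels_Cons_product distinct_map distinct_product del: labels.simps)
qed

lemma length_labels: "set js \<subseteq> supp P \<Longrightarrow> length (labels P js) = 2 ^ length js"
proof (induction js)
  case Nil
  then show ?case by simp
next
  case (Cons j js)
  then have "P j \<noteq> PI" by (auto simp: supp_def)
  then have "length (other_letters P j) = 2" by (cases "P j") auto
  with Cons show ?case by (simp add: labels_Cons_product del: labels.simps)
qed

lemma finite_supp: "pauli_string n P \<Longrightarrow> finite (supp P)"
  unfolding pauli_string_def supp_def
  by (rule finite_subset[of _ "{..<n}"]) (auto simp: not_less[symmetric])

lemma set_supp_list: "pauli_string n P \<Longrightarrow> set (supp_list P) = supp P"
  by (simp add: supp_list_def finite_supp)

lemma length_lookups:
  assumes "pauli_string n P"
  shows "length (lookups P) = 3 ^ weight P"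
proof -
  have "length (lookups P) = (\<Sum>js\<leftarrow>subseqs (supp_list P). length (labels P js))"
    by (simp add: lookups_def length_concat o_def)
  also have "\<dots> = (\<Sum>js\<leftarrow>subseqs (supp_list P). 2 ^ length js)"
    using set_subseqs_subset set_supp_list[OF assms]
    by (intro arg_cong[where f = sum_list] map_cong refl length_labels) blast
  also have "\<dots> = 3 ^ weight P"
    by (simp add: sum_list_subseqs_power supp_list_def weight_def)
  finally show ?thesis .
qed

lemma card_le_weight_if_in_lookups:
  assumes "pauli_string n P" and "(A, a) \<in> set (lookups P)"
  shows "card A \<le> weight P"
proof -
  from assms(2) obtain js where "js \<in> set (subseqs (supp_list P))" "A = set js"
    by (auto simp: lookups_def)
  then have "A \<subseteq> supp P" using set_subseqs_subset set_supp_list[OF assms(1)] by blast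
  then show ?thesis unfolding weight_def using finite_supp[OF assms(1)] by (rule card_mono[rotated])
qed

lemma Zalg_eq_Zspec:
  assumes "pauli_string n P"
  shows "Zalg D P = Zspec D P"
proof -
  define F where "F A = (-2::int) ^ card A * (\<Sum>a\<in>LP P A. D (A, a))" for A
  have dist: "distinct (supp_list P)" by (simp add: supp_list_def)
  have F_labels: "(\<Sum>a\<leftarrow>labels P js. (-2) ^ card (set js) * D (set js, a)) = F (set js)"
    if "js \<in> set (subseqs (supp_list P))" for js
  proof -
    have "distinct js" using that dist by (rule subseqs_distinctD)
    then show ?thesis
      by (simp add: sum_list_distinct_conv_sum_set distinct_labels set_labels F_def sum_distrib_left)
  qed
  have "Zalg D P = (\<Sum>js\<leftarrow>subseqs (supp_list P).
                      \<Sum>a\<leftarrow>labels P js. (-2) ^ card (set js) * D (set js, a))"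
    by (simp add: Zalg_def lookups_def sum_list_concat map_concat o_def)
  also have "\<dots> = (\<Sum>A\<leftarrow>map set (subseqs (supp_list P)). F A)"
    using F_labels by (simp add: o_def cong: map_cong)
  also have "\<dots> = sum F (Pow (supp P))"
    by (simp only: sum_list_distinct_conv_sum_set distinct_set_subseqs[OF dist] set_map
        subseqs_powset set_supp_list[OF assms])
  finally show ?thesis by (simp add: Zspec_def F_def)
qed

lemma algo_cost_le:
  assumes "pauli_string n P" and lookup_cost: "\<forall>r. lc r \<le> c * (real r + 1)"
  shows "algo_cost lc P \<le> (\<bar>c\<bar> + 2) * (real (weight P) + 1) * 3 ^ weight P"
proof -
  let ?w = "real (weight P) + 1"
  have step: "lc (card A) + real (card A) + 1 \<le> (\<bar>c\<bar> + 1) * ?w"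
    if "(A, a) \<in> set (lookups P)" for A a
  proof -
    have r: "real (card A) + 1 \<le> ?w"
      using card_le_weight_if_in_lookups[OF assms(1) that] by simp
    have "lc (card A) \<le> c * (real (card A) + 1)" using lookup_cost by blast
    also have "\<dots> \<le> \<bar>c\<bar> * (real (card A) + 1)" by (intro mult_right_mono) auto
    also have "\<dots> \<le> \<bar>c\<bar> * ?w" using r by (simp add: mult_left_mono)
    finally show ?thesis using r by (simp add: algebra_simps)
  qed
  have "(\<Sum>(A, a)\<leftarrow>lookups P. lc (card A) + real (card A) + 1) \<le> (\<Sum>_\<leftarrow>lookups P. (\<bar>c\<bar> + 1) * ?w)"
    using step by (intro sum_list_mono) auto
  also have "\<dots> = (\<bar>c\<bar> + 1) * ?w * 3 ^ weight P"
    by (simp add: sum_list_triv length_lookups[OF assms(1)])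
  moreover have "?w \<le> ?w * 3 ^ weight P" by simp
  ultimately show ?thesis by (simp add: algo_cost_def algebra_simps)
qed

theorem lemma5:
  fixes lc :: "nat \<Rightarrow> real" and c :: real
  assumes lookup_cost: "\<forall>r. lc r \<le> c * (real r + 1)"
  shows "\<exists>K::real. \<forall>(n::nat) (P::nat \<Rightarrow> pauli) (D::dict) (N::int).
           pauli_string n P \<longrightarrow>
             algo_result D N P = of_int (N - Zspec D P) / 2
           \<and> length (lookups P) = 3 ^ weight P
           \<and> algo_cost lc P \<le> K * real (max 1 (weight P)) * 3 ^ weight P"
proof (intro exI allI impI conjI)
  fix n P D N
  assume P: "pauli_string n P"
  show "algo_result D N P = of_int (N - Zspec D P) / 2"
    by (simp add: algo_result_def Zalg_eq_Zspec[OF P])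
  show "length (lookups P) = 3 ^ weight P" by (rule length_lookups[OF P])
  have "algo_cost lc P \<le> (\<bar>c\<bar> + 2) * (real (weight P) + 1) * 3 ^ weight P"
    by (rule algo_cost_le[OF P lookup_cost])
  also have "\<dots> \<le> (\<bar>c\<bar> + 2) * (2 * real (max 1 (weight P))) * 3 ^ weight P"
    by (intro mult_right_mono mult_left_mono) auto
  finally show "algo_cost lc P \<le> (2 * \<bar>c\<bar> + 4) * real (max 1 (weight P)) * 3 ^ weight P"
    by (simp add: algebra_simps)
qed

end
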